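(* Let $f:\mathbb{R}^n\times\mathbb{R}^p\to[-\infty,\infty]$ be a proper nearly convex function and $F:\mathbb{R}^n\rightrightarrows\mathbb{R}^p$ a nearly convex set-valued mapping with $\operatorname{ri}(\operatorname{dom} f)\cap\operatorname{ri}(\operatorname{gph} F)\neq\emptyset$, and let $\mu(x)=\inf\{f(x,y):y\in F(x)\}$. Then for all $w\in\mathbb{R}^n$, $$\mu^*(w)=(f^*\square F^* )(w,0)=\inf\{f^*(w_1,v_1)+F^*(w_2,v_2): w_1+w_2=w,\ v_1+v_2=0\}.$$ Moreover, if $\mu^*(w)\in\mathbb{R}$, there exist $w_1,w_2\in\mathbb{R}^n$ with $w_1+w_2=w$ and $v\in\mathbb{R}^p$ such that $\mu^*(w)=f^*(w_1,v)+F^*(w_2,-v)$.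
   Context: A set $\Omega$ is nearly convex if there is a convex set $C$ with $C\subset\Omega\subset\overline{C}$; $\operatorname{ri}\Omega=\{a\in\Omega:\exists\delta>0,\ B(a;\delta)\cap\operatorname{aff}\Omega\subset\Omega\}$. A function is nearly convex if its epigraph is nearly convex, proper if its domain $\{f<\infty\}$ is nonempty and $f>-\infty$; a set-valued mapping is nearly convex if its graph $\operatorname{gph}F=\{(x,y):y\in F(x)\}$ is. Fenchel conjugate: $f^*(z)=\sup_x\{\langle z,x\rangle-f(x)\}$. Fenchel conjugate of a set-valued mapping: $F^*(u,v)=\sigma_{\operatorname{gph}F}(u,v)=\sup\{\langle u,x\rangle+\langle v,y\rangle:(x,y)\in\operatorname{gph}F\}$. Infimal convolution: $(g\square h)(z)=\inf\{g(z_1)+h(z_2):z_1+z_2=z\}$. *)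

theory Defs
  imports "HOL-Analysis.Analysis"
begin

definition nearly_convex :: "'a::real_normed_vector set \<Rightarrow> bool" where
  "nearly_convex S \<longleftrightarrow> (\<exists>C. convex C \<and> C \<subseteq> S \<and> S \<subseteq> closure C)"

definition epi :: "('a \<Rightarrow> ereal) \<Rightarrow> ('a \<times> real) set" where
  "epi f = {(x, t). f x \<le> ereal t}"

definition edom :: "('a \<Rightarrow> ereal) \<Rightarrow> 'a set" where
  "edom f = {x. f x < \<infinity>}"

definition proper_fun :: "('a \<Rightarrow> ereal) \<Rightarrow> bool" where
  "proper_fun f \<longleftrightarrow> edom f \<noteq> {} \<and> (\<forall>x. f x > -\<infinity>)"

definition nearly_convex_fun :: "('a::real_normed_vector \<Rightarrow> ereal) \<Rightarrow> bool" where
  "nearly_convex_fun f \<longleftrightarrow> nearly_convex (epi f)"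

definition gph :: "('a \<Rightarrow> 'b set) \<Rightarrow> ('a \<times> 'b) set" where
  "gph F = {(x, y). y \<in> F x}"

definition fconj :: "('a::real_inner \<Rightarrow> ereal) \<Rightarrow> 'a \<Rightarrow> ereal" where
  "fconj f z = (SUP x. ereal (z \<bullet> x) - f x)"

definition sv_conj :: "('a::real_inner \<Rightarrow> 'b::real_inner set) \<Rightarrow> 'a \<times> 'b \<Rightarrow> ereal" where
  "sv_conj F uv = (SUP xy \<in> gph F. ereal (uv \<bullet> xy))"

definition infconv :: "('a::ab_group_add \<Rightarrow> ereal) \<Rightarrow> ('a \<Rightarrow> ereal) \<Rightarrow> 'a \<Rightarrow> ereal" where
  "infconv g h z = (INF p \<in> {(z1, z2). z1 + z2 = z}. g (fst p) + h (snd p))"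

end

theory Submission
  imports Defs
begin

text \<open>
  \<open>\<mu>\<^sup>*(w)\<close> is the conjugate of \<open>f + \<delta>\<^bsub>gph F\<^esub>\<close> at \<open>(w, 0)\<close>, so the theorem is the
  sum rule for conjugates with attainment. If \<open>\<alpha> = (f + \<delta>\<^sub>G)\<^sup>*(z)\<close> is finite, the point
  \<open>(0, -\<alpha>)\<close> lies on the relative boundary of the nearly convex set of all
  \<open>(u - v, s - z \<bullet> u)\<close> with \<open>(u, s) \<in> epi f\<close> and \<open>v \<in> G\<close>, hence is properly separated from it
  by some \<open>(y, c)\<close>. The common relative interior point forces \<open>c > 0\<close>, and
  \<open>z\<^sub>2 = y / c\<close>, \<open>z\<^sub>1 = z - z\<^sub>2\<close> attains \<open>\<alpha> = f\<^sup>*(z\<^sub>1) + \<sigma>\<^sub>G(z\<^sub>2)\<close>.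
\<close>

definition support_fun :: "'a::real_inner set \<Rightarrow> 'a \<Rightarrow> ereal" where
  "support_fun S z = (SUP u\<in>S. ereal (z \<bullet> u))"

text \<open>\<open>conj_on S f\<close> is the conjugate of \<open>f + \<delta>\<^sub>S\<close>.\<close>
definition conj_on :: "'a::real_inner set \<Rightarrow> ('a \<Rightarrow> ereal) \<Rightarrow> 'a \<Rightarrow> ereal" where
  "conj_on S f z = (SUP u\<in>S. ereal (z \<bullet> u) - f u)"

lemma sv_conj_eq_support_fun: "sv_conj F = support_fun (gph F)"
  by (simp add: fun_eq_iff sv_conj_def support_fun_def)

lemma fconj_marginal_eq_conj_on_gph:
  fixes f :: "'a::real_inner \<times> 'b::real_inner \<Rightarrow> ereal"
  assumes \<mu>: "\<And>x. \<mu> x = (INF y\<in>F x. f (x, y))"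
  shows "fconj \<mu> w = conj_on (gph F) f (w, 0)"
proof -
  have pointwise: "ereal (w \<bullet> x) - \<mu> x = (SUP y\<in>F x. ereal (w \<bullet> x) - f (x, y))" for x
  proof (cases "F x = {}")
    case True then show ?thesis by (simp add: \<mu> top_ereal_def bot_ereal_def)
  next
    case False then show ?thesis by (simp add: \<mu> SUP_ereal_minus_right)
  qed
  have "gph F = (\<Union>x. (\<lambda>y. (x, y)) ` F x)" by (auto simp: gph_def)
  then show ?thesis
    by (simp add: fconj_def conj_on_def pointwise SUP_UNION image_image inner_Pair)
qed

lemma nearly_convex_Times:
  assumes "nearly_convex S" "nearly_convex T"
  shows "nearly_convex (S \<times> T)"
proof -
  obtain C D where "convex C" "C \<subseteq> S" "S \<subseteq> closure C" "convex D" "D \<subseteq> T" "T \<subseteq> closure D"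
    using assms unfolding nearly_convex_def by blast
  then show ?thesis unfolding nearly_convex_def
    by (intro exI[of _ "C \<times> D"]) (auto simp: convex_Times closure_Times)
qed

lemma nearly_convex_linear_image:
  fixes L :: "'a::euclidean_space \<Rightarrow> 'b::real_normed_vector"
  assumes "linear L" "nearly_convex S"
  shows "nearly_convex (L ` S)"
proof -
  obtain C where C: "convex C" "C \<subseteq> S" "S \<subseteq> closure C"
    using assms(2) unfolding nearly_convex_def by blast
  have "L ` S \<subseteq> closure (L ` C)"
    using C(3) closure_linear_image_subset[OF assms(1), of C] by blast
  then show ?thesis unfolding nearly_convex_def
    using C convex_linear_image[OF assms(1) C(1)] by blast
qed

lemma nearly_convex_proper_separation:
  fixes S :: "'a::euclidean_space set"
  assumes "nearly_convex S" "p \<in> closure S" "p \<notin> rel_interior S"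
  obtains a where "\<And>y. y \<in> S \<Longrightarrow> a \<bullet> p \<le> a \<bullet> y" and "\<exists>y\<in>S. a \<bullet> p < a \<bullet> y"
proof -
  obtain C where C: "convex C" "C \<subseteq> S" "S \<subseteq> closure C"
    using assms(1) unfolding nearly_convex_def by blast
  have pC: "p \<in> closure C"
    using closure_minimal[OF C(3) closed_closure] assms(2) by blast
  have "affine hull S \<subseteq> affine hull C"
    using hull_mono[OF C(3), of affine] by simp
  then have "affine hull C = affine hull S"
    using hull_mono[OF C(2), of affine] by blast
  then have "rel_interior C \<subseteq> rel_interior S" by (rule subset_rel_interior[OF C(2)])
  then have "p \<notin> rel_interior C" using assms(3) by blast
  then obtain a where a: "\<And>y. y \<in> closure C \<Longrightarrow> a \<bullet> p \<le> a \<bullet> y"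
    "\<And>y. y \<in> rel_interior C \<Longrightarrow> a \<bullet> p < a \<bullet> y"
    using supporting_hyperplane_relative_frontier[OF C(1) pC] by metis
  have "rel_interior C \<noteq> {}"
    using pC rel_interior_eq_empty[OF C(1)] by auto
  then obtain y where "y \<in> rel_interior C" by blast
  then have "\<exists>y\<in>S. a \<bullet> p < a \<bullet> y" using a(2) C(2) rel_interior_subset by blast
  moreover have "a \<bullet> p \<le> a \<bullet> y" if "y \<in> S" for y using a(1) C(3) that by blast
  ultimately show ?thesis using that by blast
qed

lemma rel_interior_linear_min_const:
  fixes S :: "'a::euclidean_space set"
  assumes x0: "x0 \<in> rel_interior S" and min: "\<And>x. x \<in> S \<Longrightarrow> y \<bullet> x0 \<le> y \<bullet> x"
    and x: "x \<in> S"
  shows "y \<bullet> x = y \<bullet> x0"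
proof (cases "x = x0")
  case False
  obtain e where e: "e > 0" "ball x0 e \<inter> affine hull S \<subseteq> S"
    using x0 mem_rel_interior_ball by blast
  have x0S: "x0 \<in> S" using x0 rel_interior_subset by blast
  define t where "t = e / (2 * norm (x - x0))"
  have np: "norm (x - x0) > 0" using False by simp
  have t: "t > 0" using e np by (simp add: t_def)
  \<comment> \<open>a point beyond \<open>x0\<close> on the line through \<open>x\<close>, still in the relative ball\<close>
  define q where "q = (1 + t) *\<^sub>R x0 + (- t) *\<^sub>R x"
  have "q \<in> affine hull S"
    unfolding q_def
    by (rule mem_affine[OF affine_affine_hull]) (use x x0S hull_inc in auto)
  moreover have "dist x0 q < e"
  proof -
    have "x0 - q = t *\<^sub>R (x - x0)" by (simp add: q_def algebra_simps)
    then have "dist x0 q = t * norm (x - x0)" using t by (simp add: dist_norm)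
    also have "\<dots> = e / 2" using np by (simp add: t_def)
    finally show ?thesis using e by simp
  qed
  ultimately have "q \<in> S" using e by auto
  then have "y \<bullet> x0 \<le> y \<bullet> q" using min by blast
  then have "y \<bullet> x0 \<le> (1 + t) * (y \<bullet> x0) - t * (y \<bullet> x)"
    by (simp add: q_def inner_add_right inner_diff_right)
  then have "y \<bullet> x \<le> y \<bullet> x0" using t by (simp add: algebra_simps)
  then show ?thesis using min[OF x] by linarith
qed simp

lemma conj_on_le_fconj_plus_support:
  fixes f :: "'a::real_inner \<Rightarrow> ereal"
  assumes fin: "\<And>x. f x > -\<infinity>" and "z1 + z2 = z"
  shows "conj_on G f z \<le> fconj f z1 + support_fun G z2"
  unfolding conj_on_def
proof (rule SUP_least)
  fix u assume u: "u \<in> G"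
  show "ereal (z \<bullet> u) - f u \<le> fconj f z1 + support_fun G z2"
  proof (cases "f u")
    case (real r)
    have "ereal (z \<bullet> u) - f u = (ereal (z1 \<bullet> u) - f u) + ereal (z2 \<bullet> u)"
      using assms(2) real by (auto simp: inner_add_left)
    also have "\<dots> \<le> fconj f z1 + support_fun G z2"
      unfolding fconj_def support_fun_def
      by (intro add_mono SUP_upper u UNIV_I)
    finally show ?thesis .
  qed (use fin[of u] in auto)
qed

lemma conj_on_separation:
  fixes f :: "'a::euclidean_space \<Rightarrow> ereal"
  assumes ncf: "nearly_convex (epi f)" and ncG: "nearly_convex G"
    and ar: "conj_on G f z = ereal ar"
  obtains y c
  where "\<And>u s v. f u \<le> ereal s \<Longrightarrow> v \<in> G \<Longrightarrow> - c * ar \<le> y \<bullet> (u - v) + c * (s - z \<bullet> u)"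
    and "\<exists>u s v. f u \<le> ereal s \<and> v \<in> G \<and> - c * ar < y \<bullet> (u - v) + c * (s - z \<bullet> u)"
proof -
  define L :: "('a \<times> real) \<times> 'a \<Rightarrow> 'a \<times> real" where
    "L p = (fst (fst p) - snd p, snd (fst p) - z \<bullet> fst (fst p))" for p
  define W where "W = L ` (epi f \<times> G)"
  define p0 where "p0 = ((0::'a), - ar)"
  have "linear L"
    by (rule linearI) (auto simp: L_def algebra_simps inner_add_right)
  then have ncW: "nearly_convex W"
    unfolding W_def by (intro nearly_convex_linear_image nearly_convex_Times ncf ncG)
  have in_W: "L ((u, s), v) \<in> W" if "f u \<le> ereal s" "v \<in> G" for u s v
    unfolding W_def using that by (auto simp: epi_def)
  have W_cases: "\<exists>u s v. f u \<le> ereal s \<and> v \<in> G \<and> q = L ((u, s), v)" if "q \<in> W" for q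
    using that unfolding W_def epi_def by auto
  have below: "z \<bullet> u - s \<le> ar" if "f u \<le> ereal s" "u \<in> G" for u s
  proof -
    have "ereal (z \<bullet> u - s) \<le> ereal (z \<bullet> u) - f u"
      using that(1) by (metis ereal_minus_mono ereal_minus(1) order_refl)
    also have "\<dots> \<le> ereal ar"
      unfolding ar[symmetric] conj_on_def using that(2) by (rule SUP_upper)
    finally show ?thesis by simp
  qed
  have "p0 \<in> closure W"
    unfolding closure_approachable
  proof (intro allI impI)
    fix e :: real assume e: "e > 0"
    then have "ereal (ar - e) < conj_on G f z" using ar by simp
    then obtain u where u: "u \<in> G" "ereal (ar - e) < ereal (z \<bullet> u) - f u"
      unfolding conj_on_def less_SUP_iff by blast
    moreover have "ereal (z \<bullet> u) - f u \<le> ereal ar"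
      unfolding ar[symmetric] conj_on_def using u(1) by (rule SUP_upper)
    ultimately obtain r where r: "f u = ereal r" by (cases "f u") auto
    have "L ((u, r), u) \<in> W" using r u by (intro in_W) auto
    moreover have "dist (L ((u, r), u)) p0 < e"
      using below[of u r] r u by (simp add: L_def p0_def dist_Pair_Pair dist_real_def)
    ultimately show "\<exists>x\<in>W. dist x p0 < e" by blast
  qed
  moreover have "p0 \<notin> rel_interior W"
  proof
    assume p0ri: "p0 \<in> rel_interior W"
    then obtain e where e: "e > 0" "ball p0 e \<inter> affine hull W \<subseteq> W"
      using mem_rel_interior_ball by blast
    have p0W: "p0 \<in> W" using p0ri rel_interior_subset by blast
    then obtain u s v where usv: "f u \<le> ereal s" "v \<in> G" "p0 = L ((u, s), v)"
      using W_cases by blast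
    have "L ((u, s + 1), v) \<in> W" using usv by (intro in_W) (auto intro: order_trans)
    then have p1: "p0 + (0, 1) \<in> affine hull W"
      using usv by (auto simp: L_def algebra_simps intro: hull_inc)
    \<comment> \<open>moving \<open>p0\<close> down inside the affine hull would beat the supremum \<open>ar\<close>\<close>
    define q where "q = (1 + e/2) *\<^sub>R p0 + (- (e/2)) *\<^sub>R (p0 + (0, 1))"
    have "q \<in> affine hull W" unfolding q_def
      by (rule mem_affine[OF affine_affine_hull]) (use p1 p0W hull_inc in auto)
    moreover have q: "q = (0, - ar - e/2)"
      unfolding q_def p0_def by (simp add: algebra_simps, simp add: field_simps)
    moreover have "dist p0 q < e" using e by (simp add: q p0_def dist_Pair_Pair dist_real_def)
    ultimately have "q \<in> W" using e by auto
    then obtain u s v where "f u \<le> ereal s" "v \<in> G" "(0, - ar - e/2) = L ((u, s), v)"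
      using W_cases q by blast
    then show False using below[of u s] e by (auto simp: L_def)
  qed
  ultimately obtain a where a: "\<And>q. q \<in> W \<Longrightarrow> a \<bullet> p0 \<le> a \<bullet> q" "\<exists>q\<in>W. a \<bullet> p0 < a \<bullet> q"
    using nearly_convex_proper_separation[OF ncW] by blast
  obtain y c where yc: "a = (y, c)" by (cases a)
  show thesis
  proof (rule that[of c y])
    show "- c * ar \<le> y \<bullet> (u - v) + c * (s - z \<bullet> u)" if "f u \<le> ereal s" "v \<in> G" for u s v
      using a(1)[OF in_W[OF that]] by (simp add: yc p0_def L_def inner_Pair)
    show "\<exists>u s v. f u \<le> ereal s \<and> v \<in> G \<and> - c * ar < y \<bullet> (u - v) + c * (s - z \<bullet> u)"
      using a(2) W_cases by (fastforce simp: yc p0_def L_def inner_Pair)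
  qed
qed

lemma conj_on_separation_coeff_pos:
  fixes f :: "'a::euclidean_space \<Rightarrow> ereal"
  assumes u0f: "u0 \<in> rel_interior (edom f)" and u0G: "u0 \<in> rel_interior G"
    and H: "\<And>u s v. f u \<le> ereal s \<Longrightarrow> v \<in> G \<Longrightarrow> - c * ar \<le> y \<bullet> (u - v) + c * (s - z \<bullet> u)"
    and strict: "\<exists>u s v. f u \<le> ereal s \<and> v \<in> G \<and> - c * ar < y \<bullet> (u - v) + c * (s - z \<bullet> u)"
  shows "c > 0"
proof -
  have u0e: "u0 \<in> edom f" and u0g: "u0 \<in> G"
    using u0f u0G rel_interior_subset by blast+
  have bounded: "\<exists>s. f u \<le> ereal s" if "u \<in> edom f" for u
    using that unfolding edom_def by (cases "f u") auto
  have "c \<ge> 0"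
  proof (rule ccontr)
    assume "\<not> c \<ge> 0"
    then have c: "c < 0" by simp
    obtain s0 where s0: "f u0 \<le> ereal s0" using bounded[OF u0e] by blast
    define s where "s = max s0 (z \<bullet> u0 - ar + 1)"
    have "f u0 \<le> ereal s" using s0 by (simp add: s_def order_trans)
    then have "- c * ar \<le> c * (s - z \<bullet> u0)" using H[of u0 s u0] u0g by simp
    moreover have "c * (s - z \<bullet> u0) \<le> c * (1 - ar)"
      using c by (intro mult_left_mono_neg) (auto simp: s_def)
    ultimately show False using c by (simp add: algebra_simps)
  qed
  moreover have "c \<noteq> 0"
  proof
    assume c: "c = 0"
    have sep: "y \<bullet> v \<le> y \<bullet> u" if "u \<in> edom f" "v \<in> G" for u v
      using bounded[OF that(1)] H[OF _ that(2)] c by (auto simp: inner_diff_right)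
    \<comment> \<open>a linear functional separating two sets that share a relative interior point
        is constant on both\<close>
    have on_dom: "y \<bullet> u = y \<bullet> u0" if "u \<in> edom f" for u
      using rel_interior_linear_min_const[OF u0f _ that] sep u0g by blast
    have on_G: "(- y) \<bullet> v = (- y) \<bullet> u0" if "v \<in> G" for v
      using rel_interior_linear_min_const[OF u0G _ that, of "- y"] sep u0e by simp
    obtain u s v where "f u \<le> ereal s" "v \<in> G" "0 < y \<bullet> (u - v)"
      using strict c by auto
    moreover from this have "u \<in> edom f" by (auto simp: edom_def)
    ultimately show False using on_dom on_G by (simp add: inner_diff_right)
  qed
  ultimately show ?thesis by simp
qed

lemma conj_on_attained:
  fixes f :: "'a::euclidean_space \<Rightarrow> ereal"
  assumes fin: "\<And>x. f x > -\<infinity>" and ncf: "nearly_convex (epi f)" and ncG: "nearly_convex G"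
    and u0f: "u0 \<in> rel_interior (edom f)" and u0G: "u0 \<in> rel_interior G"
    and finite: "conj_on G f z \<noteq> \<infinity>"
  shows "\<exists>z1. conj_on G f z = fconj f z1 + support_fun G (z - z1)"
proof -
  have u0e: "u0 \<in> edom f" and u0g: "u0 \<in> G"
    using u0f u0G rel_interior_subset by blast+
  obtain r0 where r0: "f u0 = ereal r0"
    using u0e fin[of u0] unfolding edom_def by (cases "f u0") auto
  have "ereal (z \<bullet> u0 - r0) \<le> conj_on G f z"
    unfolding conj_on_def using u0g r0 SUP_upper[of u0 G "\<lambda>u. ereal (z \<bullet> u) - f u"] by simp
  then obtain ar where ar: "conj_on G f z = ereal ar" using finite by (cases "conj_on G f z") auto
  obtain y c
    where H: "\<And>u s v. f u \<le> ereal s \<Longrightarrow> v \<in> G \<Longrightarrow> - c * ar \<le> y \<bullet> (u - v) + c * (s - z \<bullet> u)"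
      and strict: "\<exists>u s v. f u \<le> ereal s \<and> v \<in> G \<and> - c * ar < y \<bullet> (u - v) + c * (s - z \<bullet> u)"
    using conj_on_separation[OF ncf ncG ar] by metis
  have c: "c > 0" using conj_on_separation_coeff_pos[OF u0f u0G H strict] .
  define z2 where "z2 = (1/c) *\<^sub>R y"
  define z1 where "z1 = z - z2"
  have split_bound: "z1 \<bullet> u - r + z2 \<bullet> v \<le> ar" if "f u = ereal r" "v \<in> G" for u r v
  proof -
    have "- ar \<le> (y \<bullet> (u - v)) / c + (r - z \<bullet> u)"
      using H[of u r v] that c by (simp add: field_simps)
    then show ?thesis by (simp add: z1_def z2_def inner_diff_left inner_diff_right diff_divide_distrib)
  qed
  have fconj_le: "fconj f z1 \<le> ereal (ar - z2 \<bullet> v)" if "v \<in> G" for v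
    unfolding fconj_def
  proof (rule SUP_least)
    fix x
    show "ereal (z1 \<bullet> x) - f x \<le> ereal (ar - z2 \<bullet> v)"
    proof (cases "f x")
      case (real r) then show ?thesis using split_bound[OF real that] by simp
    qed (use fin[of x] in auto)
  qed
  have "ereal (z1 \<bullet> u0) - f u0 \<le> fconj f z1" unfolding fconj_def by (rule SUP_upper) simp
  then obtain b where b: "fconj f z1 = ereal b"
    using fconj_le[OF u0g] r0 by (cases "fconj f z1") auto
  have support_le: "support_fun G z2 \<le> ereal (ar - b)"
    unfolding support_fun_def
    by (rule SUP_least) (use fconj_le b in \<open>fastforce simp: algebra_simps\<close>)
  have "fconj f z1 + support_fun G z2 \<le> conj_on G f z"
    using add_left_mono[OF support_le, of "ereal b"] b ar by simp
  moreover have "conj_on G f z \<le> fconj f z1 + support_fun G z2"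
    by (rule conj_on_le_fconj_plus_support[OF fin]) (simp add: z1_def)
  ultimately show ?thesis by (intro exI[of _ z1]) (simp add: z1_def)
qed

lemma conj_on_eq_infconv:
  fixes f :: "'a::euclidean_space \<Rightarrow> ereal"
  assumes fin: "\<And>x. f x > -\<infinity>" and ncf: "nearly_convex (epi f)" and ncG: "nearly_convex G"
    and u0f: "u0 \<in> rel_interior (edom f)" and u0G: "u0 \<in> rel_interior G"
  shows "conj_on G f z = infconv (fconj f) (support_fun G) z"
  unfolding infconv_def
proof (rule antisym)
  show "conj_on G f z \<le> (INF p\<in>{(z1, z2). z1 + z2 = z}. fconj f (fst p) + support_fun G (snd p))"
    by (rule INF_greatest) (auto intro: conj_on_le_fconj_plus_support[OF fin])
  show "(INF p\<in>{(z1, z2). z1 + z2 = z}. fconj f (fst p) + support_fun G (snd p)) \<le> conj_on G f z"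
  proof (cases "conj_on G f z = \<infinity>")
    case False
    then obtain z1 where "conj_on G f z = fconj f z1 + support_fun G (z - z1)"
      using conj_on_attained[OF fin ncf ncG u0f u0G] by blast
    then show ?thesis by (intro INF_lower2[of "(z1, z - z1)"]) auto
  qed simp
qed

theorem theorem6p3:
  fixes f :: "(real^('n::finite)) \<times> (real^('p::finite)) \<Rightarrow> ereal"
    and F :: "real^'n \<Rightarrow> (real^'p) set"
    and \<mu> :: "real^'n \<Rightarrow> ereal"
  assumes "proper_fun f"
    and "nearly_convex_fun f"
    and "nearly_convex (gph F)"
    and "rel_interior (edom f) \<inter> rel_interior (gph F) \<noteq> {}"
    and "\<And>x. \<mu> x = (INF y \<in> F x. f (x, y))"
  shows "\<forall>w. fconj \<mu> w = infconv (fconj f) (sv_conj F) (w, 0)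
           \<and> fconj \<mu> w = (INF q \<in> {((w1, v1), (w2, v2)). w1 + w2 = w \<and> v1 + v2 = 0}.
                              fconj f (fst q) + sv_conj F (snd q))
           \<and> (\<bar>fconj \<mu> w\<bar> \<noteq> \<infinity> \<longrightarrow>
           (\<exists>w1 w2 v. w1 + w2 = w \<and> fconj \<mu> w = fconj f (w1, v) + sv_conj F (w2, - v)))"
proof
  fix w :: "real^'n"
  have fin: "\<And>x. f x > -\<infinity>" using assms(1) unfolding proper_fun_def by blast
  have ncf: "nearly_convex (epi f)" using assms(2) unfolding nearly_convex_fun_def .
  obtain u0 where u0f: "u0 \<in> rel_interior (edom f)" and u0G: "u0 \<in> rel_interior (gph F)"
    using assms(4) by blast
  have marginal: "fconj \<mu> w = conj_on (gph F) f (w, 0)"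
    by (rule fconj_marginal_eq_conj_on_gph[OF assms(5)])
  have dual: "fconj \<mu> w = infconv (fconj f) (sv_conj F) (w, 0)"
    using marginal conj_on_eq_infconv[OF fin ncf assms(3) u0f u0G]
    by (simp add: sv_conj_eq_support_fun)
  have splits: "{(z1, z2). z1 + z2 = (w, 0)} = {((w1, v1), (w2, v2)). w1 + w2 = w \<and> v1 + v2 = 0}"
    by auto
  have dual_pairs: "fconj \<mu> w = (INF q \<in> {((w1, v1), (w2, v2)). w1 + w2 = w \<and> v1 + v2 = 0}.
                                fconj f (fst q) + sv_conj F (snd q))"
    using dual unfolding infconv_def splits .
  have attained: "\<exists>w1 w2 v. w1 + w2 = w \<and> fconj \<mu> w = fconj f (w1, v) + sv_conj F (w2, - v)"
    if finite: "\<bar>fconj \<mu> w\<bar> \<noteq> \<infinity>"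
  proof -
    have "conj_on (gph F) f (w, 0) \<noteq> \<infinity>" using finite marginal by auto
    then obtain z1 where "conj_on (gph F) f (w, 0) = fconj f z1 + support_fun (gph F) ((w, 0) - z1)"
      using conj_on_attained[OF fin ncf assms(3) u0f u0G] by blast
    then have "fconj \<mu> w = fconj f z1 + sv_conj F ((w, 0) - z1)"
      by (simp add: marginal sv_conj_eq_support_fun)
    moreover obtain w1 v where "z1 = (w1, v)" by (cases z1)
    ultimately show ?thesis by (intro exI[of _ w1] exI[of _ "w - w1"] exI[of _ v]) simp
  qed
  show "fconj \<mu> w = infconv (fconj f) (sv_conj F) (w, 0)
           \<and> fconj \<mu> w = (INF q \<in> {((w1, v1), (w2, v2)). w1 + w2 = w \<and> v1 + v2 = 0}.
                              fconj f (fst q) + sv_conj F (snd q))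
           \<and> (\<bar>fconj \<mu> w\<bar> \<noteq> \<infinity> \<longrightarrow>
           (\<exists>w1 w2 v. w1 + w2 = w \<and> fconj \<mu> w = fconj f (w1, v) + sv_conj F (w2, - v)))"
    using dual dual_pairs attained by blast
qed

end
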